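(* Let $v$ be a nonzero vector of $\mathbb{F}_4^n$ and, for $1\le k\le n$, let $\sigma_k$ be the number of self-orthogonal additive codes over $\mathbb{F}_4$ of length $n$ and dimension $k$ containing $v$. Then \[ \sigma_k=\prod_{i=1}^{k-1}\frac{2^{2(n-i)}-1}{2^i-1} \] (with the empty product equal to $1$); in particular $\sigma_k$ does not depend on $v$.
   Context: $\mathbb{F}_4=\{0,1,\omega,\omega^2\}$ with $\omega^2=\omega+1$, $\bar x:=x^2$. Trace inner product $\langle u,v\rangle=\sum_{i}(u_i\bar v_i+\bar u_i v_i)\in\mathbb{F}_2$ on $\mathbb{F}_4^n$. An additive code of length $n$ is an $\mathbb{F}_2$-subspace of $\mathbb{F}_4^n$, with dimension meaning $\mathbb{F}_2$-dimension; $C^\perp$ is its dual under the trace inner product, and $C$ is self-orthogonal if $C\subseteq C^\perp$. *)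

theory Defs
  imports Complex_Main
begin

text \<open>The field F4 = {0, 1, w, w^2} with w^2 = w + 1.
  An element is identified with a + b w (a, b in F2).\<close>
datatype F4 = F4_0 | F4_1 | F4_w | F4_w2

fun f4_pair :: "F4 \<Rightarrow> bool \<times> bool" where
  "f4_pair F4_0 = (False, False)"
| "f4_pair F4_1 = (True, False)"
| "f4_pair F4_w = (False, True)"
| "f4_pair F4_w2 = (True, True)"

fun f4_of_pair :: "bool \<times> bool \<Rightarrow> F4" where
  "f4_of_pair (False, False) = F4_0"
| "f4_of_pair (True, False) = F4_1"
| "f4_of_pair (False, True) = F4_w"
| "f4_of_pair (True, True) = F4_w2"

definition f4_add :: "F4 \<Rightarrow> F4 \<Rightarrow> F4" where
  "f4_add x y = (case f4_pair x of (a, b) \<Rightarrow> case f4_pair y of (c, d) \<Rightarrow>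
      f4_of_pair (a \<noteq> c, b \<noteq> d))"

text \<open>(a + b w)(c + d w) = (ac + bd) + (ad + bc + bd) w\<close>
definition f4_mul :: "F4 \<Rightarrow> F4 \<Rightarrow> F4" where
  "f4_mul x y = (case f4_pair x of (a, b) \<Rightarrow> case f4_pair y of (c, d) \<Rightarrow>
      f4_of_pair ((a \<and> c) \<noteq> (b \<and> d), ((a \<and> d) \<noteq> (b \<and> c)) \<noteq> (b \<and> d)))"

definition f4_conj :: "F4 \<Rightarrow> F4" where
  "f4_conj x = f4_mul x x"

definition vecs :: "nat \<Rightarrow> (nat \<Rightarrow> F4) set" where
  "vecs n = {u. \<forall>i\<ge>n. u i = F4_0}"

definition vadd :: "(nat \<Rightarrow> F4) \<Rightarrow> (nat \<Rightarrow> F4) \<Rightarrow> nat \<Rightarrow> F4" where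
  "vadd u v = (\<lambda>i. f4_add (u i) (v i))"

definition trace_ip :: "nat \<Rightarrow> (nat \<Rightarrow> F4) \<Rightarrow> (nat \<Rightarrow> F4) \<Rightarrow> F4" where
  "trace_ip n u v = foldr f4_add
      (map (\<lambda>i. f4_add (f4_mul (u i) (f4_conj (v i))) (f4_mul (f4_conj (u i)) (v i))) [0..<n]) F4_0"

text \<open>Additive code of length n: an F2-subspace of F4^n, i.e. a nonempty
  subset closed under addition (scalars are only 0 and 1).\<close>
definition additive_code :: "nat \<Rightarrow> (nat \<Rightarrow> F4) set \<Rightarrow> bool" where
  "additive_code n C \<longleftrightarrow> C \<subseteq> vecs n \<and> (\<lambda>i. F4_0) \<in> C \<and> (\<forall>u\<in>C. \<forall>v\<in>C. vadd u v \<in> C)"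

definition code_dim :: "(nat \<Rightarrow> F4) set \<Rightarrow> nat \<Rightarrow> bool" where
  "code_dim C k \<longleftrightarrow> finite C \<and> card C = 2 ^ k"

definition self_orthogonal :: "nat \<Rightarrow> (nat \<Rightarrow> F4) set \<Rightarrow> bool" where
  "self_orthogonal n C \<longleftrightarrow> (\<forall>u\<in>C. \<forall>v\<in>C. trace_ip n u v = F4_0)"

end

theory Submission
  imports Defs "HOL-Library.Function_Algebras" "HOL-Library.FuncSet"
begin

(* Count in two ways the lists of vectors (w_1, ..., w_m), m = k - 1, in which every w_j is
   orthogonal to, but not contained in, the code T_j generated by v, w_1, ..., w_(j-1).
   The trace form is nondegenerate, so |T^perp| = 4^n / |T| for every additive code T; hence
   there are 2^j (4^(n-j) - 1) choices for w_j whatever the earlier choices were.  Every such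
   list generates a self-orthogonal code of dimension k containing v, and each such code C
   is generated by exactly the lists whose entries are taken from C, of which there are
   prod_j 2^j (2^(k-j) - 1).  The quotient of the two products is the claimed number. *)

lemma card_kernel_of_two_valued_hom:
  fixes f :: "'a::group_add \<Rightarrow> 'b::group_add"
  assumes "finite G" and add_closed: "\<And>a b. a \<in> G \<Longrightarrow> b \<in> G \<Longrightarrow> a + b \<in> G"
    and hom: "\<And>a b. a \<in> G \<Longrightarrow> b \<in> G \<Longrightarrow> f (a + b) = f a + f b"
    and two_valued: "f ` G \<subseteq> {0, c}" and "g \<in> G" "f g = c" "c \<noteq> 0"
  shows "2 * card {x \<in> G. f x = 0} = card G"
proof -
  let ?K = "{x \<in> G. f x = 0}" and ?L = "{x \<in> G. f x = c}"
  have "c + c \<in> {0, c}"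
    using two_valued add_closed[of g g] hom[of g g] \<open>g \<in> G\<close> \<open>f g = c\<close> by auto
  then have "c + c = 0"
    using \<open>c \<noteq> 0\<close> by (metis add.right_neutral add_left_cancel insertE singletonD)
  then have "(+) g ` ?K \<subseteq> ?L" "(+) g ` ?L \<subseteq> ?K"
    using add_closed hom \<open>g \<in> G\<close> \<open>f g = c\<close> by auto
  moreover have "inj ((+) g)"
    by (simp add: inj_on_def)
  ultimately have "card ?K = card ?L"
    using \<open>finite G\<close> by (intro le_antisym card_inj_on_le) (auto intro: inj_on_subset)
  moreover have "card (?K \<union> ?L) = card ?K + card ?L"
    using \<open>finite G\<close> \<open>c \<noteq> 0\<close> by (intro card_Un_disjoint) auto
  moreover have "G = ?K \<union> ?L"
    using two_valued by auto
  ultimately show ?thesis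
    by simp
qed

lemma sum_card_filter_swap:
  assumes "finite A" "finite B"
  shows "(\<Sum>a\<in>A. card {b \<in> B. P a b}) = (\<Sum>b\<in>B. card {a \<in> A. P a b})"
proof -
  have "(\<Sum>a\<in>A. card {b \<in> B. P a b}) = (\<Sum>a\<in>A. \<Sum>b\<in>B. of_bool (P a b))"
    using assms(2) by (simp add: Int_def conj_commute)
  also have "\<dots> = (\<Sum>b\<in>B. \<Sum>a\<in>A. of_bool (P a b))"
    by (rule sum.swap)
  also have "\<dots> = (\<Sum>b\<in>B. card {a \<in> A. P a b})"
    using assms(1) by (simp add: Int_def conj_commute)
  finally show ?thesis .
qed

lemma card_Diff_pow2:
  assumes "finite B" "A \<subseteq> B" "card B = 2 ^ k" "card A = 2 ^ i" "i \<le> k"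
  shows "card (B - A) = 2 ^ i * (2 ^ (k - i) - 1)"
proof -
  have "(2::nat) ^ k = 2 ^ i * 2 ^ (k - i)"
    using assms(5) by (simp flip: power_add)
  then show ?thesis
    using assms by (simp add: card_Diff_subset finite_subset diff_mult_distrib2)
qed

fun admissible :: "('a list \<Rightarrow> 'a set) \<Rightarrow> 'a list \<Rightarrow> bool" where
  "admissible A [] \<longleftrightarrow> True"
| "admissible A (x # xs) \<longleftrightarrow> x \<in> A xs \<and> admissible A xs"

lemma card_admissible_lists:
  assumes "\<And>xs. admissible A xs \<Longrightarrow> length xs < m \<Longrightarrow> finite (A xs)"
    and "\<And>xs. admissible A xs \<Longrightarrow> length xs < m \<Longrightarrow> card (A xs) = f (length xs)"
  shows "card {xs. length xs = m \<and> admissible A xs} = (\<Prod>j<m. f j)"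
proof -
  have "finite {xs. length xs = m \<and> admissible A xs} \<and>
    card {xs. length xs = m \<and> admissible A xs} = (\<Prod>j<m. f j)"
    using assms
  proof (induction m)
    case 0
    have "{xs. length xs = 0 \<and> admissible A xs} = {[]}"
      by auto
    then show ?case
      by simp
  next
    case (Suc m)
    let ?L = "{xs. length xs = m \<and> admissible A xs}"
    have IH: "finite ?L" "card ?L = (\<Prod>j<m. f j)"
      using Suc by auto
    have fibres: "finite (A ys)" "card (A ys) = f m" if "ys \<in> ?L" for ys
      using Suc.prems that by auto
    have "{xs. length xs = Suc m \<and> admissible A xs} = (\<lambda>(ys, x). x # ys) ` (SIGMA ys:?L. A ys)"
      by (auto simp: length_Suc_conv image_iff)
    moreover have "inj_on (\<lambda>(ys, x). x # ys) (SIGMA ys:?L. A ys)"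
      by (auto simp: inj_on_def)
    moreover have "finite (SIGMA ys:?L. A ys)"
      using IH(1) fibres(1) by (rule finite_SigmaI)
    moreover have "card (SIGMA ys:?L. A ys) = card ?L * f m"
      using IH(1) fibres by (simp add: card_SigmaI)
    ultimately show ?case
      using IH(2) by (simp add: card_image mult.commute)
  qed
  then show ?thesis ..
qed

section \<open>The trace form on \<open>F4^n\<close>\<close>

instantiation F4 :: ab_group_add
begin

definition zero_F4 :: F4 where "0 = F4_0"
definition plus_F4 :: "F4 \<Rightarrow> F4 \<Rightarrow> F4" where "plus_F4 = f4_add"
definition uminus_F4 :: "F4 \<Rightarrow> F4" where "uminus_F4 x = x"
definition minus_F4 :: "F4 \<Rightarrow> F4 \<Rightarrow> F4" where "minus_F4 = f4_add"

instance
proof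
  fix a b c :: F4
  show "a + b + c = a + (b + c)"
    by (cases a; cases b; cases c) (simp_all add: plus_F4_def f4_add_def)
  show "a + b = b + a"
    by (cases a; cases b) (simp_all add: plus_F4_def f4_add_def)
  show "0 + a = a"
    by (cases a) (simp_all add: zero_F4_def plus_F4_def f4_add_def)
  show "- a + a = 0"
    by (cases a) (simp_all add: zero_F4_def plus_F4_def uminus_F4_def f4_add_def)
  show "a - b = a + - b"
    by (simp add: plus_F4_def minus_F4_def uminus_F4_def)
qed

end

lemma F4_UNIV: "(UNIV :: F4 set) = {F4_0, F4_1, F4_w, F4_w2}"
  using F4.exhaust by blast

lemma F4_add_self [simp]: "(a :: F4) + a = 0"
  by (cases a) (simp_all add: zero_F4_def plus_F4_def f4_add_def)

lemma F2_add_closed: "a \<in> {0, F4_1} \<Longrightarrow> b \<in> {0, F4_1} \<Longrightarrow> a + b \<in> {0, F4_1}"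
  by (auto simp: zero_F4_def plus_F4_def f4_add_def)

definition f4_trace :: "F4 \<Rightarrow> F4 \<Rightarrow> F4" where
  "f4_trace a b = f4_add (f4_mul a (f4_conj b)) (f4_mul (f4_conj a) b)"

lemma f4_trace_add_left: "f4_trace (a + b) c = f4_trace a c + f4_trace b c"
  by (cases a; cases b; cases c)
    (simp_all add: f4_trace_def plus_F4_def f4_add_def f4_mul_def f4_conj_def)

lemma f4_trace_commute: "f4_trace a b = f4_trace b a"
  by (cases a; cases b) (simp_all add: f4_trace_def f4_add_def f4_mul_def f4_conj_def)

lemma f4_trace_self [simp]: "f4_trace a a = 0"
  by (cases a) (simp_all add: f4_trace_def zero_F4_def f4_add_def f4_mul_def f4_conj_def)

lemma f4_trace_zero_left [simp]: "f4_trace 0 b = 0"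
  by (cases b) (simp_all add: f4_trace_def zero_F4_def f4_add_def f4_mul_def f4_conj_def)

lemma f4_trace_in_F2: "f4_trace a b \<in> {0, F4_1}"
  by (cases a; cases b) (simp_all add: f4_trace_def zero_F4_def f4_add_def f4_mul_def f4_conj_def)

lemma f4_trace_nondegenerate: "b \<noteq> 0 \<Longrightarrow> \<exists>a. f4_trace a b = F4_1"
  by (cases b) (auto simp: f4_trace_def zero_F4_def f4_add_def f4_mul_def f4_conj_def
      intro: exI[of _ F4_1] exI[of _ F4_w])

type_synonym vec4 = "nat \<Rightarrow> F4"

lemma vadd_eq_plus: "vadd u w = u + w"
  by (simp add: vadd_def plus_fun_def plus_F4_def)

lemma zero_vector_eq: "(\<lambda>i. F4_0) = 0"
  by (simp add: zero_fun_def zero_F4_def)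

lemma vector_add_self [simp]: "(u :: vec4) + u = 0"
  by (simp add: plus_fun_def zero_fun_def)

lemma vector_add_cancel_left [simp]: "(u :: vec4) + (u + w) = w"
  by (simp add: add.assoc[symmetric])

lemma zero_in_vecs [simp]: "0 \<in> vecs n"
  by (simp add: vecs_def zero_F4_def)

lemma vecs_add: "u \<in> vecs n \<Longrightarrow> w \<in> vecs n \<Longrightarrow> u + w \<in> vecs n"
  by (simp add: vecs_def zero_F4_def plus_F4_def f4_add_def)

lemma finite_vecs: "finite (vecs n)" and card_vecs: "card (vecs n) = 4 ^ n"
proof -
  have "bij_betw (\<lambda>u. restrict u {..<n}) (vecs n) ({..<n} \<rightarrow>\<^sub>E UNIV)"
  proof (rule bij_betw_byWitness[where f' = "\<lambda>e i. if i < n then e i else F4_0"])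
    show "\<forall>e\<in>{..<n} \<rightarrow>\<^sub>E UNIV. restrict (\<lambda>i. if i < n then e i else F4_0) {..<n} = e"
    proof (intro ballI ext)
      fix e :: "nat \<Rightarrow> F4" and i
      assume e: "e \<in> {..<n} \<rightarrow>\<^sub>E UNIV"
      show "restrict (\<lambda>i. if i < n then e i else F4_0) {..<n} i = e i"
        using PiE_arb[OF e, of i] by (cases "i < n") simp_all
    qed
    show "\<forall>u\<in>vecs n. (\<lambda>i. if i < n then restrict u {..<n} i else F4_0) = u"
      by (auto simp: vecs_def fun_eq_iff)
    show "(\<lambda>u. restrict u {..<n}) ` vecs n \<subseteq> {..<n} \<rightarrow>\<^sub>E UNIV"
      by (simp add: image_subset_iff)
    show "(\<lambda>e i. if i < n then e i else F4_0) ` ({..<n} \<rightarrow>\<^sub>E UNIV) \<subseteq> vecs n"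
      by (simp add: vecs_def image_subset_iff)
  qed
  moreover have "finite ({..<n} \<rightarrow>\<^sub>E (UNIV :: F4 set))"
    and "card ({..<n} \<rightarrow>\<^sub>E (UNIV :: F4 set)) = 4 ^ n"
    by (simp_all add: finite_PiE card_funcsetE F4_UNIV eval_nat_numeral)
  ultimately show "finite (vecs n)" "card (vecs n) = 4 ^ n"
    by (simp_all add: bij_betw_finite bij_betw_same_card)
qed

lemma finite_subset_vecs: "C \<subseteq> vecs n \<Longrightarrow> finite C"
  by (rule finite_subset[OF _ finite_vecs])

lemma trace_ip_eq_sum: "trace_ip n u w = (\<Sum>i<n. f4_trace (u i) (w i))"
proof -
  have "trace_ip n u w = sum_list (map (\<lambda>i. f4_trace (u i) (w i)) [0..<n])"
    by (simp add: trace_ip_def f4_trace_def sum_list.eq_foldr plus_F4_def zero_F4_def)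
  then show ?thesis
    by (simp add: interv_sum_list_conv_sum_set_nat atLeast0LessThan)
qed

lemma trace_ip_add_left: "trace_ip n (u + w) x = trace_ip n u x + trace_ip n w x"
  by (simp add: trace_ip_eq_sum f4_trace_add_left sum.distrib)

lemma trace_ip_commute: "trace_ip n u w = trace_ip n w u"
  by (simp add: trace_ip_eq_sum f4_trace_commute)

lemma trace_ip_add_right: "trace_ip n x (u + w) = trace_ip n x u + trace_ip n x w"
  by (simp add: trace_ip_commute[of n x] trace_ip_add_left)

lemma trace_ip_self [simp]: "trace_ip n u u = 0"
  by (simp add: trace_ip_eq_sum)

lemma trace_ip_zero_right [simp]: "trace_ip n w 0 = 0"
  using trace_ip_add_right[of n w 0 0] by simp

lemma trace_ip_in_F2: "trace_ip n u w \<in> {0, F4_1}"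
proof (induction n)
  case (Suc n)
  have "trace_ip (Suc n) u w = trace_ip n u w + f4_trace (u n) (w n)"
    by (simp add: trace_ip_eq_sum)
  then show ?case
    using F2_add_closed[OF Suc f4_trace_in_F2] by simp
qed (simp add: trace_ip_eq_sum)

lemma trace_ip_nondegenerate:
  assumes "w \<in> vecs n" "w \<noteq> 0"
  shows "\<exists>u\<in>vecs n. trace_ip n u w = F4_1"
proof -
  obtain i where wi: "w i \<noteq> 0"
    using assms(2) by (auto simp: fun_eq_iff)
  have "i < n"
  proof (rule ccontr)
    assume "\<not> i < n"
    then show False
      using assms(1) wi by (simp add: vecs_def zero_F4_def)
  qed
  obtain a where a: "f4_trace a (w i) = F4_1"
    using f4_trace_nondegenerate wi by blast
  define u where "u j = (if j = i then a else 0)" for j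
  have "trace_ip n u w = (\<Sum>j<n. if j = i then f4_trace a (w i) else 0)"
    unfolding trace_ip_eq_sum by (rule sum.cong) (auto simp: u_def)
  also have "\<dots> = F4_1"
    using \<open>i < n\<close> a by simp
  finally have "trace_ip n u w = F4_1" .
  moreover have "u \<in> vecs n"
    using \<open>i < n\<close> by (simp add: vecs_def u_def zero_F4_def)
  ultimately show ?thesis
    by blast
qed

section \<open>Dual codes\<close>

lemma additive_code_iff:
  "additive_code n C \<longleftrightarrow> C \<subseteq> vecs n \<and> 0 \<in> C \<and> (\<forall>u\<in>C. \<forall>w\<in>C. u + w \<in> C)"
  by (simp add: additive_code_def vadd_eq_plus zero_vector_eq)

lemma self_orthogonal_iff:
  "self_orthogonal n C \<longleftrightarrow> (\<forall>u\<in>C. \<forall>w\<in>C. trace_ip n u w = 0)"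
  by (simp add: self_orthogonal_def zero_F4_def)

definition dual :: "nat \<Rightarrow> vec4 set \<Rightarrow> vec4 set" where
  "dual n C = {w \<in> vecs n. \<forall>c\<in>C. trace_ip n w c = 0}"

lemma finite_dual: "finite (dual n C)"
  by (rule finite_subset_vecs) (auto simp: dual_def)

lemma self_orthogonal_iff_subset_dual:
  "C \<subseteq> vecs n \<Longrightarrow> self_orthogonal n C \<longleftrightarrow> C \<subseteq> dual n C"
  by (auto simp: self_orthogonal_iff dual_def)

text \<open>Count the pairs \<open>(c, w) \<in> C \<times> F4^n\<close> with \<open>trace_ip n w c = 0\<close> in two ways: a nonzero
  \<open>c\<close> is orthogonal to half of \<open>F4^n\<close>, and a \<open>w\<close> outside the dual to half of \<open>C\<close>.\<close>

lemma card_code_mult_card_dual: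
  assumes "additive_code n C"
  shows "card C * card (dual n C) = 4 ^ n"
proof -
  let ?V = "vecs n" and ?D = "dual n C"
  have "C \<subseteq> ?V" "0 \<in> C" and C_add: "\<And>a b. a \<in> C \<Longrightarrow> b \<in> C \<Longrightarrow> a + b \<in> C"
    using assms by (auto simp: additive_code_iff)
  have "finite C"
    using \<open>C \<subseteq> ?V\<close> by (rule finite_subset_vecs)
  have "?D \<subseteq> ?V"
    by (auto simp: dual_def)
  have "2 * card {w \<in> ?V. trace_ip n w c = 0} = card ?V + (if c = 0 then card ?V else 0)"
    if "c \<in> C" for c
  proof (cases "c = 0")
    case False
    then obtain u where "u \<in> ?V" "trace_ip n u c = F4_1"
      using trace_ip_nondegenerate \<open>C \<subseteq> ?V\<close> \<open>c \<in> C\<close> by blast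
    then show ?thesis
      using False trace_ip_in_F2
      by (subst card_kernel_of_two_valued_hom[where c = F4_1])
        (auto simp: finite_vecs vecs_add trace_ip_add_left zero_F4_def)
  qed simp
  then have "2 * (\<Sum>c\<in>C. card {w \<in> ?V. trace_ip n w c = 0}) = card C * card ?V + card ?V"
    using \<open>finite C\<close> \<open>0 \<in> C\<close> by (simp add: sum_distrib_left sum.distrib)
  moreover have "2 * card {c \<in> C. trace_ip n w c = 0} = card C + (if w \<in> ?D then card C else 0)"
    if "w \<in> ?V" for w
  proof (cases "w \<in> ?D")
    case False
    then obtain c where "c \<in> C" "trace_ip n w c = F4_1"
      using \<open>w \<in> ?V\<close> trace_ip_in_F2 by (fastforce simp: dual_def)
    then show ?thesis
      using False trace_ip_in_F2
      by (subst card_kernel_of_two_valued_hom[where c = F4_1])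
        (auto simp: \<open>finite C\<close> C_add trace_ip_add_right zero_F4_def)
  next
    case True
    then have "{c \<in> C. trace_ip n w c = 0} = C"
      by (auto simp: dual_def)
    with True show ?thesis
      by simp
  qed
  then have "2 * (\<Sum>w\<in>?V. card {c \<in> C. trace_ip n w c = 0}) = card ?V * card C + card ?D * card C"
    using \<open>?D \<subseteq> ?V\<close> finite_vecs
    by (simp add: sum_distrib_left sum.distrib sum.If_cases Int_absorb1 Int_absorb2)
  moreover have "(\<Sum>c\<in>C. card {w \<in> ?V. trace_ip n w c = 0})
      = (\<Sum>w\<in>?V. card {c \<in> C. trace_ip n w c = 0})"
    using \<open>finite C\<close> finite_vecs by (rule sum_card_filter_swap)
  ultimately have "card C * card ?V + card ?V = card ?V * card C + card ?D * card C"
    by linarith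
  then have "card ?V = card C * card ?D"
    by (simp add: algebra_simps)
  then show ?thesis
    using card_vecs by simp
qed

lemma card_dual_Diff:
  assumes "additive_code n T" "self_orthogonal n T" "card T = 2 ^ i" "i \<le> n"
  shows "card (dual n T - T) = 2 ^ i * (4 ^ (n - i) - 1)"
proof -
  have "(4::nat) ^ n = 2 ^ i * 2 ^ (2 * n - i)"
    using assms(4) by (simp add: power_mult flip: power_add)
  then have "card (dual n T) = 2 ^ (2 * n - i)"
    using card_code_mult_card_dual[OF assms(1)] assms(3) by simp
  moreover have "T \<subseteq> dual n T"
    using assms(1,2) self_orthogonal_iff_subset_dual by (auto simp: additive_code_iff)
  ultimately have "card (dual n T - T) = 2 ^ i * (2 ^ (2 * n - i - i) - 1)"
    using assms(3,4) finite_dual by (intro card_Diff_pow2) auto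
  moreover have "2 * n - i - i = 2 * (n - i)"
    by simp
  ultimately show ?thesis
    by (simp add: power_mult)
qed

section \<open>Extending self-orthogonal codes one vector at a time\<close>

text \<open>For an additive code \<open>T\<close>, \<open>extend T w\<close> is the code generated by \<open>T\<close> and \<open>w\<close>, and
  \<open>span_with S [w\<^sub>j, ..., w\<^sub>1]\<close> the one generated by \<open>S\<close> and \<open>w\<^sub>1, ..., w\<^sub>j\<close>.\<close>

definition extend :: "vec4 set \<Rightarrow> vec4 \<Rightarrow> vec4 set" where
  "extend T w = T \<union> (+) w ` T"

fun span_with :: "vec4 set \<Rightarrow> vec4 list \<Rightarrow> vec4 set" where
  "span_with S [] = S"
| "span_with S (w # ws) = extend (span_with S ws) w"

lemma mem_extend_iff: "x \<in> extend T w \<longleftrightarrow> x \<in> T \<or> w + x \<in> T"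
  by (auto simp: extend_def image_iff intro: bexI[of _ "w + x"])

lemma additive_code_extend:
  assumes "additive_code n T" "w \<in> vecs n"
  shows "additive_code n (extend T w)"
proof -
  have closed: "a + b \<in> T" if "a \<in> T" "b \<in> T" for a b
    using assms(1) that by (simp add: additive_code_iff)
  have "x + y \<in> extend T w" if xy: "x \<in> extend T w" "y \<in> extend T w" for x y
  proof -
    consider "x \<in> T" "y \<in> T" | "x \<in> T" "w + y \<in> T" | "w + x \<in> T" "y \<in> T"
      | "w + x \<in> T" "w + y \<in> T"
      using xy unfolding mem_extend_iff by blast
    then show ?thesis
    proof cases
      case 2
      then have "x + (w + y) \<in> T"
        by (rule closed)
      then show ?thesis
        by (simp add: mem_extend_iff add.left_commute)
    next
      case 3
      then have "(w + x) + y \<in> T"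
        by (rule closed)
      then show ?thesis
        by (simp add: mem_extend_iff add.assoc)
    next
      case 4
      then have "(w + x) + (w + y) \<in> T"
        by (rule closed)
      then show ?thesis
        by (simp add: mem_extend_iff add_ac)
    qed (simp add: mem_extend_iff closed)
  qed
  moreover have "extend T w \<subseteq> vecs n"
    using assms by (auto simp: extend_def additive_code_iff vecs_add)
  ultimately show ?thesis
    using assms(1) by (auto simp: additive_code_iff extend_def)
qed

lemma card_extend:
  assumes "additive_code n T" "w \<notin> T"
  shows "card (extend T w) = 2 * card T"
proof -
  have "finite T"
    using assms(1) finite_subset_vecs by (auto simp: additive_code_iff)
  have "T \<inter> (+) w ` T = {}"
  proof (rule ccontr)
    assume "T \<inter> (+) w ` T \<noteq> {}"
    then obtain t where "t \<in> T" "w + t \<in> T"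
      by auto
    then have "w \<in> T"
      using assms(1) vector_add_cancel_left[of t w] by (metis add.commute additive_code_iff)
    with assms(2) show False ..
  qed
  moreover have "card ((+) w ` T) = card T"
    by (simp add: card_image inj_on_def)
  ultimately show ?thesis
    using \<open>finite T\<close> by (simp add: extend_def card_Un_disjoint)
qed

lemma self_orthogonal_extend:
  assumes "self_orthogonal n T" "w \<in> dual n T"
  shows "self_orthogonal n (extend T w)"
proof -
  have T: "trace_ip n a b = 0" if "a \<in> T" "b \<in> T" for a b
    using assms(1) that by (simp add: self_orthogonal_iff)
  have wT: "trace_ip n w a = 0" "trace_ip n a w = 0" if "a \<in> T" for a
    using assms(2) that trace_ip_commute[of n a w] by (auto simp: dual_def)
  show ?thesis
    unfolding self_orthogonal_iff extend_def
    by (auto simp: trace_ip_add_left trace_ip_add_right T wT)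
qed

lemma extend_subset:
  assumes "additive_code n C" "T \<subseteq> C" "w \<in> C"
  shows "extend T w \<subseteq> C"
  using assms by (auto simp: extend_def additive_code_iff)

lemma subset_span_with: "S \<subseteq> span_with S ws"
  by (induction ws) (auto simp: extend_def)

lemma span_with_self_orthogonal_code:
  assumes "admissible (\<lambda>ys. dual n (span_with S ys) - span_with S ys) xs"
    and "additive_code n S" "self_orthogonal n S"
  shows "additive_code n (span_with S xs) \<and> self_orthogonal n (span_with S xs)
    \<and> card (span_with S xs) = 2 ^ length xs * card S"
  using assms(1)
proof (induction xs)
  case (Cons w ws)
  then have "additive_code n (span_with S ws)" "self_orthogonal n (span_with S ws)"
      "card (span_with S ws) = 2 ^ length ws * card S"
    and w: "w \<in> dual n (span_with S ws)" "w \<notin> span_with S ws"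
    by auto
  moreover have "w \<in> vecs n"
    using w(1) by (simp add: dual_def)
  ultimately show ?case
    by (simp add: additive_code_extend self_orthogonal_extend card_extend)
qed (use assms(2,3) in simp)

lemma admissible_within_code_iff:
  assumes "additive_code n C" "self_orthogonal n C" "S \<subseteq> C" "0 \<in> S"
  shows "admissible (\<lambda>ys. C - span_with S ys) xs \<longleftrightarrow>
    admissible (\<lambda>ys. dual n (span_with S ys) - span_with S ys) xs \<and> span_with S xs \<subseteq> C"
proof (induction xs)
  case (Cons w ws)
  let ?T = "span_with S ws"
  have "w \<in> C \<longleftrightarrow> w \<in> dual n ?T \<and> extend ?T w \<subseteq> C" if "?T \<subseteq> C"
  proof
    assume "w \<in> C"
    moreover from this have "w \<in> dual n ?T"
      using assms(1,2) that by (auto simp: additive_code_iff self_orthogonal_iff dual_def)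
    ultimately show "w \<in> dual n ?T \<and> extend ?T w \<subseteq> C"
      using extend_subset[OF assms(1) that] by blast
  next
    assume "w \<in> dual n ?T \<and> extend ?T w \<subseteq> C"
    moreover have "w \<in> extend ?T w"
      using assms(4) subset_span_with by (auto simp: mem_extend_iff)
    ultimately show "w \<in> C"
      by blast
  qed
  moreover have "?T \<subseteq> extend ?T w"
    by (simp add: extend_def)
  ultimately show ?case
    using Cons.IH by auto
qed (use assms(3) in simp)

definition isotropic_extensions :: "nat \<Rightarrow> vec4 set \<Rightarrow> nat \<Rightarrow> vec4 list set" where
  "isotropic_extensions n S m =
    {xs. length xs = m \<and> admissible (\<lambda>ys. dual n (span_with S ys) - span_with S ys) xs}"

definition extensions_within :: "vec4 set \<Rightarrow> vec4 set \<Rightarrow> nat \<Rightarrow> vec4 list set" where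
  "extensions_within C S m = {xs. length xs = m \<and> admissible (\<lambda>ys. C - span_with S ys) xs}"

definition self_orthogonal_supercodes :: "nat \<Rightarrow> nat \<Rightarrow> vec4 set \<Rightarrow> vec4 set set" where
  "self_orthogonal_supercodes n k S =
    {C. additive_code n C \<and> code_dim C k \<and> self_orthogonal n C \<and> S \<subseteq> C}"

lemma card_isotropic_extensions:
  assumes "additive_code n S" "self_orthogonal n S" "card S = 2 ^ s" "s + m \<le> n"
  shows "card (isotropic_extensions n S m) = (\<Prod>j<m. 2 ^ (s + j) * (4 ^ (n - (s + j)) - 1))"
  unfolding isotropic_extensions_def
proof (rule card_admissible_lists)
  fix xs
  assume xs: "admissible (\<lambda>ys. dual n (span_with S ys) - span_with S ys) xs" "length xs < m"
  show "finite (dual n (span_with S xs) - span_with S xs)"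
    using finite_dual by simp
  show "card (dual n (span_with S xs) - span_with S xs)
      = 2 ^ (s + length xs) * (4 ^ (n - (s + length xs)) - 1)"
    using span_with_self_orthogonal_code[OF xs(1) assms(1,2)] assms(3,4) xs(2)
    by (intro card_dual_Diff) (auto simp: power_add)
qed

lemma card_extensions_within:
  assumes "additive_code n C" "self_orthogonal n C" "card C = 2 ^ k"
    and "additive_code n S" "self_orthogonal n S" "card S = 2 ^ s" "S \<subseteq> C" "s + m \<le> k"
  shows "card (extensions_within C S m) = (\<Prod>j<m. 2 ^ (s + j) * (2 ^ (k - (s + j)) - 1))"
  unfolding extensions_within_def
proof (rule card_admissible_lists)
  have "finite C" "0 \<in> S"
    using assms(1,4) finite_subset_vecs by (auto simp: additive_code_iff)
  fix xs
  assume xs: "admissible (\<lambda>ys. C - span_with S ys) xs" "length xs < m"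
  then have "admissible (\<lambda>ys. dual n (span_with S ys) - span_with S ys) xs" "span_with S xs \<subseteq> C"
    using admissible_within_code_iff[OF assms(1,2,7) \<open>0 \<in> S\<close>] by auto
  then show "card (C - span_with S xs) = 2 ^ (s + length xs) * (2 ^ (k - (s + length xs)) - 1)"
    using span_with_self_orthogonal_code[OF _ assms(4,5)] \<open>finite C\<close> assms(3,6,8) xs(2)
    by (intro card_Diff_pow2) (auto simp: power_add)
  show "finite (C - span_with S xs)"
    using \<open>finite C\<close> by simp
qed

lemma finite_extensions_within:
  assumes "finite C"
  shows "finite (extensions_within C S m)"
proof -
  have "set xs \<subseteq> C" if "admissible (\<lambda>ys. C - span_with S ys) xs" for xs
    using that by (induction xs) auto
  then have "extensions_within C S m \<subseteq> {xs. set xs \<subseteq> C \<and> length xs = m}"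
    by (auto simp: extensions_within_def)
  then show ?thesis
    using finite_lists_length_eq[OF assms] by (rule finite_subset)
qed

lemma span_with_extensions_within_eq:
  assumes "C \<in> self_orthogonal_supercodes n (s + m) S"
    and "additive_code n S" "self_orthogonal n S" "card S = 2 ^ s"
    and "xs \<in> extensions_within C S m"
  shows "span_with S xs = C"
proof -
  have C: "additive_code n C" "self_orthogonal n C" "finite C" "card C = 2 ^ (s + m)" "S \<subseteq> C"
    using assms(1) by (auto simp: self_orthogonal_supercodes_def code_dim_def)
  moreover have "0 \<in> S"
    using assms(2) by (simp add: additive_code_iff)
  ultimately have "admissible (\<lambda>ys. dual n (span_with S ys) - span_with S ys) xs"
    and "span_with S xs \<subseteq> C"
    using assms(5) admissible_within_code_iff[of n C S xs] by (auto simp: extensions_within_def)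
  then show ?thesis
    using span_with_self_orthogonal_code[OF _ assms(2,3)] C(3,4) assms(4,5)
    by (intro card_subset_eq) (auto simp: extensions_within_def power_add mult.commute)
qed

lemma isotropic_extensions_eq_UN:
  assumes "additive_code n S" "self_orthogonal n S" "card S = 2 ^ s"
  shows "isotropic_extensions n S m
    = (\<Union>C\<in>self_orthogonal_supercodes n (s + m) S. extensions_within C S m)"
proof -
  have "0 \<in> S"
    using assms(1) by (simp add: additive_code_iff)
  show ?thesis
  proof (intro equalityI subsetI)
    fix xs
    assume "xs \<in> isotropic_extensions n S m"
    then have adm: "admissible (\<lambda>ys. dual n (span_with S ys) - span_with S ys) xs" "length xs = m"
      by (simp_all add: isotropic_extensions_def)
    define T where "T = span_with S xs"
    have T: "additive_code n T" "self_orthogonal n T" "card T = 2 ^ (s + m)"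
      using span_with_self_orthogonal_code[OF adm(1) assms(1,2)] adm(2) assms(3)
      by (simp_all add: T_def power_add mult.commute)
    then have "T \<in> self_orthogonal_supercodes n (s + m) S"
      using finite_subset_vecs subset_span_with
      by (auto simp: self_orthogonal_supercodes_def code_dim_def additive_code_iff T_def)
    moreover have "xs \<in> extensions_within T S m"
      using admissible_within_code_iff[OF T(1,2) _ \<open>0 \<in> S\<close>] adm subset_span_with
      by (auto simp: extensions_within_def T_def)
    ultimately show "xs \<in> (\<Union>C\<in>self_orthogonal_supercodes n (s + m) S. extensions_within C S m)"
      by blast
  next
    fix xs
    assume "xs \<in> (\<Union>C\<in>self_orthogonal_supercodes n (s + m) S. extensions_within C S m)"
    then obtain C where "additive_code n C" "self_orthogonal n C" "S \<subseteq> C"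
      and "xs \<in> extensions_within C S m"
      by (auto simp: self_orthogonal_supercodes_def)
    then show "xs \<in> isotropic_extensions n S m"
      using admissible_within_code_iff[of n C S xs] \<open>0 \<in> S\<close>
      by (auto simp: extensions_within_def isotropic_extensions_def)
  qed
qed

lemma card_self_orthogonal_supercodes:
  assumes "additive_code n S" "self_orthogonal n S" "card S = 2 ^ s" "s + m \<le> n"
  shows "card (self_orthogonal_supercodes n (s + m) S) * (\<Prod>j<m. 2 ^ (m - j) - 1)
    = (\<Prod>j<m. 4 ^ (n - (s + j)) - 1)"
proof -
  define X where "X = self_orthogonal_supercodes n (s + m) S"
  have code: "additive_code n C" "self_orthogonal n C" "card C = 2 ^ (s + m)" "S \<subseteq> C"
      "C \<subseteq> vecs n"
    if "C \<in> X" for C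
    using that by (auto simp: X_def self_orthogonal_supercodes_def code_dim_def additive_code_iff)
  have "finite X"
    using code(5) finite_vecs by (intro finite_subset[of X "Pow (vecs n)"]) auto
  moreover have "\<forall>C\<in>X. finite (extensions_within C S m)"
    using code(5) by (blast intro: finite_extensions_within finite_subset_vecs)
  moreover have "\<forall>C\<in>X. \<forall>C'\<in>X. C \<noteq> C' \<longrightarrow> extensions_within C S m \<inter> extensions_within C' S m = {}"
    using span_with_extensions_within_eq[OF _ assms(1-3)] unfolding X_def by blast
  ultimately have "card (isotropic_extensions n S m) = (\<Sum>C\<in>X. card (extensions_within C S m))"
    unfolding isotropic_extensions_eq_UN[OF assms(1-3)] X_def[symmetric] by (rule card_UN_disjoint)
  also have "\<dots> = card X * (\<Prod>j<m. 2 ^ (s + j) * (2 ^ (m - j) - 1))"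
    using card_extensions_within[OF code(1,2,3) assms(1-3) code(4)] by simp
  finally have "card X * ((\<Prod>j<m. 2 ^ (s + j)) * (\<Prod>j<m. 2 ^ (m - j) - 1))
      = (\<Prod>j<m. 2 ^ (s + j)) * (\<Prod>j<m. 4 ^ (n - (s + j)) - 1)"
    using card_isotropic_extensions[OF assms] by (simp add: prod.distrib)
  then show ?thesis
    by (simp add: X_def)
qed

lemma card_self_orthogonal_codes_containing:
  assumes "v \<in> vecs n" "v \<noteq> 0" "m < n"
  shows "card {C. additive_code n C \<and> code_dim C (Suc m) \<and> self_orthogonal n C \<and> v \<in> C}
      * (\<Prod>i = 1..m. 2 ^ i - 1) = (\<Prod>i = 1..m. 4 ^ (n - i) - 1)"
proof -
  have S: "additive_code n {0, v}" "self_orthogonal n {0, v}" "card {0, v} = 2 ^ 1"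
    using assms(1,2) by (auto simp: additive_code_iff self_orthogonal_iff trace_ip_commute[of n 0])
  have codes: "{C. additive_code n C \<and> code_dim C (Suc m) \<and> self_orthogonal n C \<and> v \<in> C}
      = self_orthogonal_supercodes n (1 + m) {0, v}"
    by (auto simp: self_orthogonal_supercodes_def additive_code_iff)
  have "(\<Prod>j<m. 2 ^ (m - j) - 1) = (\<Prod>j<m. 2 ^ Suc (m - Suc j) - (1::nat))"
    by (rule prod.cong) (auto simp: Suc_diff_Suc)
  also have "\<dots> = (\<Prod>j<m. 2 ^ Suc j - 1)"
    by (rule prod.nat_diff_reindex)
  also have "\<dots> = (\<Prod>i = 1..m. 2 ^ i - 1)"
    by (simp add: prod.atLeast1_atMost_eq del: power_Suc)
  finally have denominators: "(\<Prod>j<m. 2 ^ (m - j) - 1) = (\<Prod>i = 1..m. 2 ^ i - (1::nat))" .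
  have numerators: "(\<Prod>j<m. 4 ^ (n - (1 + j)) - 1) = (\<Prod>i = 1..m. 4 ^ (n - i) - (1::nat))"
    by (simp add: prod.atLeast1_atMost_eq)
  show ?thesis
    unfolding codes denominators[symmetric] numerators[symmetric]
    using assms(3) by (intro card_self_orthogonal_supercodes[OF S]) simp
qed

theorem lemmaA2:
  fixes n k :: nat and v :: "nat \<Rightarrow> F4"
  assumes "v \<in> vecs n" and "v \<noteq> (\<lambda>i. F4_0)" and "1 \<le> k" and "k \<le> n"
  shows "real (card {C. additive_code n C \<and> code_dim C k \<and> self_orthogonal n C \<and> v \<in> C})
           = (\<Prod>i = 1..k - 1. (2 ^ (2 * (n - i)) - 1) / (2 ^ i - 1 :: real))"
proof -
  obtain m where k: "k = Suc m"
    using assms(3) by (cases k) auto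
  let ?N = "card {C. additive_code n C \<and> code_dim C k \<and> self_orthogonal n C \<and> v \<in> C}"
  have "real ?N * (\<Prod>i = 1..m. 2 ^ i - 1) = (\<Prod>i = 1..m. 2 ^ (2 * (n - i)) - 1)"
    using arg_cong[OF card_self_orthogonal_codes_containing[of v n m], of real] assms k
    by (simp add: zero_vector_eq of_nat_prod of_nat_diff power_mult)
  moreover have "(2::real) ^ i \<noteq> 1" if "1 \<le> i" for i
  proof -
    have "(1::real) < 2 ^ i"
      using that by (intro one_less_power) auto
    then show ?thesis
      by simp
  qed
  then have "(\<Prod>i = 1..m. 2 ^ i - 1 :: real) \<noteq> 0"
    by (auto simp: prod_zero_iff)
  ultimately show ?thesis
    by (simp add: k prod_dividef field_simps)
qed

end
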